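(* Let $g:[0,\infty)\to[0,\infty)$ be a strictly increasing $C^1$ function with $g(0)=0$. Assume there is $a_*>0$ such that $c_0:=\min_{[0,a_*]}g'>0$ and $g$ restricted to $[a_*,\infty)$ is convex. Let $c_1=\max_{[0,a_*]}g'$ and $\gamma=c_1/c_0$. Then $$g(x)+g(y)\le g(x+\gamma y)\quad\text{for all }x,y\in[0,\infty).$$ *)

theory Defs
  imports "HOL-Analysis.Analysis"
begin

end

theory Submission
  imports Defs
begin

text \<open>
  Put \<open>h s = g (x + \<gamma> s) - g x - g s\<close>, so that \<open>h 0 = 0\<close> and \<open>h' s = \<gamma> g' (x + \<gamma> s) - g' s\<close>.
  Since \<open>x + \<gamma> s \<ge> s\<close>, it suffices that \<open>g' s \<le> \<gamma> g' t\<close> whenever \<open>0 < s \<le> t\<close>.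
  On \<open>[0, a]\<close> this holds because \<open>g' s \<le> c\<^sub>1 = \<gamma> c\<^sub>0\<close> and \<open>c\<^sub>0\<close> bounds \<open>g'\<close> from below
  everywhere; beyond \<open>a\<close> it holds because the derivative of a convex function is nondecreasing.
\<close>

lemma convex_on_deriv_mono_open:
  fixes g g' :: "real \<Rightarrow> real"
  assumes conv: "convex_on {a..} g"
    and deriv: "\<And>t. t > a \<Longrightarrow> (g has_real_derivative g' t) (at t)"
    and "a < s" "s \<le> t"
  shows "g' s \<le> g' t"
proof -
  have tangent: "g v - g u \<ge> g' u * (v - u)" if "u > a" "v \<ge> a" for u v
    using that by (intro convex_on_imp_above_tangent[OF conv])
      (auto intro: has_field_derivative_at_within deriv)
  have "g t - g s \<ge> g' s * (t - s)" "g s - g t \<ge> g' t * (s - t)"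
    using tangent assms(3,4) by auto
  then have "g' s * (t - s) \<le> g' t * (t - s)"
    by (simp add: algebra_simps)
  then show ?thesis
    using assms(3,4) by (cases "s = t") auto
qed

lemma convex_on_deriv_mono:
  fixes g g' :: "real \<Rightarrow> real"
  assumes conv: "convex_on {a..} g"
    and deriv: "\<And>t. t > a \<Longrightarrow> (g has_real_derivative g' t) (at t)"
    and cont: "continuous_on {a..} g'"
  shows "mono_on {a..} g'"
proof (rule mono_onI)
  fix s t assume st: "s \<in> {a..}" "t \<in> {a..}" "s \<le> t"
  show "g' s \<le> g' t"
  proof (cases "a < s")
    case True
    then show ?thesis
      using convex_on_deriv_mono_open[OF conv deriv] st by blast
  next
    case False
    with st have "s = a" by simp
    show ?thesis
    proof (cases "s = t")
      case False
      with st \<open>s = a\<close> have "a < t" by simp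
      have "(g' \<longlongrightarrow> g' a) (at_right a)"
        using cont by (auto simp: continuous_on_def intro: tendsto_within_subset)
      moreover have "\<forall>\<^sub>F u in at_right a. g' u \<le> g' t"
        unfolding eventually_at_right_field
        using \<open>a < t\<close> convex_on_deriv_mono_open[OF conv deriv] by force
      ultimately have "g' a \<le> g' t"
        by (rule tendsto_upperbound) simp
      then show ?thesis using \<open>s = a\<close> by simp
    qed simp
  qed
qed

lemma add_le_stretch_if_deriv_ratio_bounded:
  fixes g g' :: "real \<Rightarrow> real" and \<gamma> :: real
  assumes cont: "continuous_on {0..} g"
    and deriv: "\<And>t. t > 0 \<Longrightarrow> (g has_real_derivative g' t) (at t)"
    and ratio: "\<And>s t. 0 < s \<Longrightarrow> s \<le> t \<Longrightarrow> g' s \<le> \<gamma> * g' t"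
    and "\<gamma> \<ge> 1" "x \<ge> 0" "y \<ge> 0"
  shows "g x + g y \<le> g (x + \<gamma> * y) + g 0"
proof -
  define h where "h s = g (x + \<gamma> * s) - g x - g s" for s
  have stretch_ge: "x + \<gamma> * s \<ge> s" if "s \<ge> 0" for s
    using that assms(4,5) mult_right_mono[of 1 \<gamma> s] by simp
  have h_deriv: "(h has_real_derivative \<gamma> * g' (x + \<gamma> * s) - g' s) (at s)" if "s > 0" for s
  proof -
    have "((\<lambda>s. g (x + \<gamma> * s)) has_real_derivative g' (x + \<gamma> * s) * \<gamma>) (at s)"
      using stretch_ge[of s] that
      by (intro DERIV_chain2[where g = "\<lambda>s. x + \<gamma> * s", OF deriv])
        (auto intro!: derivative_eq_intros)
    then show ?thesis
      unfolding h_def[abs_def] using deriv[OF that]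
      by (auto intro!: derivative_eq_intros simp: mult.commute)
  qed
  have h_deriv_nonneg: "\<gamma> * g' (x + \<gamma> * s) - g' s \<ge> 0" if "s > 0" for s
    using ratio[OF that stretch_ge] that by simp
  have "continuous_on {0..y} h"
    unfolding h_def[abs_def] using assms(4,5)
    by (intro continuous_intros continuous_on_compose2[OF cont] continuous_on_subset[OF cont]) auto
  then have "h 0 \<le> h y"
    using \<open>y \<ge> 0\<close> h_deriv h_deriv_nonneg by (blast intro: DERIV_nonneg_imp_increasing_open)
  then show ?thesis
    by (simp add: h_def)
qed

lemma INF_SUP_bounds_continuous_on_Icc:
  fixes f :: "real \<Rightarrow> real"
  assumes "continuous_on {a..b} f" "t \<in> {a..b}"
  shows "(INF s\<in>{a..b}. f s) \<le> f t" "f t \<le> (SUP s\<in>{a..b}. f s)"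
proof -
  have "bounded (f ` {a..b})"
    using assms(1) by (intro compact_imp_bounded compact_continuous_image) auto
  then show "(INF s\<in>{a..b}. f s) \<le> f t" "f t \<le> (SUP s\<in>{a..b}. f s)"
    using assms(2) bounded_imp_bdd_below bounded_imp_bdd_above
    by (auto intro: cINF_lower cSUP_upper)
qed

lemma le_ratio_mult_if_bounded_then_mono:
  fixes f :: "real \<Rightarrow> real"
  assumes upper: "\<And>t. t \<in> {0..a} \<Longrightarrow> f t \<le> c1"
    and lower: "\<And>t. t \<ge> 0 \<Longrightarrow> c0 \<le> f t"
    and "a \<ge> 0" "c0 > 0" and mono: "mono_on {a..} f"
    and "0 \<le> s" "s \<le> t"
  shows "f s \<le> c1 / c0 * f t"
proof -
  have ratio_ge_1: "c1 / c0 \<ge> 1"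
    using upper[of 0] lower[of 0] assms(3,4) by simp
  have ft_pos: "f t > 0"
    using lower[of t] assms(4,6,7) by simp
  show ?thesis
  proof (cases "s \<le> a")
    case True
    have "f s \<le> c1"
      using upper True \<open>0 \<le> s\<close> by simp
    also have "\<dots> = c1 / c0 * c0"
      using \<open>c0 > 0\<close> by simp
    also have "\<dots> \<le> c1 / c0 * f t"
      using lower[of t] assms(6,7) ratio_ge_1 by (intro mult_left_mono) auto
    finally show ?thesis .
  next
    case False
    then have "f s \<le> f t"
      using \<open>s \<le> t\<close> by (intro mono_onD[OF mono]) auto
    also have "\<dots> \<le> c1 / c0 * f t"
      using ft_pos ratio_ge_1 mult_right_mono[of 1 "c1 / c0" "f t"] by simp
    finally show ?thesis .
  qed
qed

theorem lemma5p3: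
  fixes g g' :: "real \<Rightarrow> real" and a :: real
  assumes deriv: "\<And>x. x \<ge> 0 \<Longrightarrow> (g has_real_derivative g' x) (at x within {0..})"
    and cont: "continuous_on {0..} g'"
    and nonneg: "\<And>x. x \<ge> 0 \<Longrightarrow> g x \<ge> 0"
    and incr: "strict_mono_on {0..} g"
    and g0: "g 0 = 0"
    and apos: "a > 0"
    and c0pos: "(INF t\<in>{0..a}. g' t) > 0"
    and conv: "convex_on {a..} g"
    and x: "x \<ge> 0" and y: "y \<ge> 0"
  shows "g x + g y \<le> g (x + ((SUP t\<in>{0..a}. g' t) / (INF t\<in>{0..a}. g' t)) * y)"
proof -
  define c0 where "c0 = (INF t\<in>{0..a}. g' t)"
  define c1 where "c1 = (SUP t\<in>{0..a}. g' t)"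
  have bounds: "c0 \<le> g' t" "g' t \<le> c1" if "t \<in> {0..a}" for t
    unfolding c0_def c1_def using cont that
    by (auto intro!: INF_SUP_bounds_continuous_on_Icc intro: continuous_on_subset)
  have deriv_at: "(g has_real_derivative g' t) (at t)" if "t > 0" for t
  proof -
    have "(g has_real_derivative g' t) (at t within {0<..})"
      using that by (intro has_field_derivative_subset[OF deriv]) auto
    then show ?thesis
      using that at_within_open[of t "{0<..}"] by simp
  qed
  have mono: "mono_on {a..} g'"
    using apos by (intro convex_on_deriv_mono[OF conv deriv_at]) (auto intro: continuous_on_subset[OF cont])
  have lower: "c0 \<le> g' t" if "t \<ge> 0" for t
    using bounds[of t] bounds[of a] mono_onD[OF mono, of a t] that apos
    by (cases "t \<le> a") auto
  have "g x + g y \<le> g (x + c1 / c0 * y) + g 0"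
  proof (rule add_le_stretch_if_deriv_ratio_bounded[OF _ deriv_at _ _ x y])
    show "continuous_on {0..} g"
      using deriv by (auto simp: continuous_on_eq_continuous_within intro: DERIV_continuous)
    show "c1 / c0 \<ge> 1"
      using bounds[of 0] apos c0pos by (simp add: c0_def)
    show "g' s \<le> c1 / c0 * g' t" if "0 < s" "s \<le> t" for s t
      using le_ratio_mult_if_bounded_then_mono[OF bounds(2) lower _ _ mono] apos c0pos that
      by (simp add: c0_def)
  qed
  then show ?thesis
    using g0 by (simp add: c0_def c1_def)
qed

end
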